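(* Let ${\sf S}_2(n,\ell)$ denote the number of $2$-noncrossing RNA structures (RNA secondary structures) on $\{1,\dots,n\}$ with exactly $\ell$ isolated vertices. If $n-\ell$ is a positive even integer, then $$ {\sf S}_2(n,\ell)=\frac{2}{n-\ell}\binom{\frac{n+\ell}{2}}{\frac{n-\ell}{2}+1}\binom{\frac{n+\ell}{2}-1}{\frac{n-\ell}{2}-1}. $$ Furthermore, for all integers $n\ge 2$ and $\ell\ge 0$ (with ${\sf S}_2(m,\ell)=0$ whenever $\ell>m$), $$ (n-\ell)(n-\ell+2)\,{\sf S}_2(n,\ell)-(n+\ell)(n+\ell-2)\,{\sf S}_2(n-2,\ell)=0. $$
   Context: A digraph on $\{1,\dots,n\}$ is a set of arcs $(i,j)$ with $1\le i<j\le n$. A $2$-noncrossing digraph is one in which every vertex lies in at most one arc and there are no two arcs $(i_1,j_1),(i_2,j_2)$ with $i_1<i_2<j_1<j_2$. A vertex is isolated if it lies in no arc. A $2$-noncrossing RNA structure is a $2$-noncrossing digraph with no arc of the form $(i,i+1)$. *)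

theory Defs
  imports Complex_Main
begin

definition digraph_on :: "nat \<Rightarrow> (nat \<times> nat) set \<Rightarrow> bool" where
  "digraph_on n A \<longleftrightarrow> (\<forall>(i,j)\<in>A. 1 \<le> i \<and> i < j \<and> j \<le> n)"

definition in_arc :: "nat \<Rightarrow> nat \<times> nat \<Rightarrow> bool" where
  "in_arc v a \<longleftrightarrow> v = fst a \<or> v = snd a"

definition two_noncrossing :: "nat \<Rightarrow> (nat \<times> nat) set \<Rightarrow> bool" where
  "two_noncrossing n A \<longleftrightarrow> digraph_on n A
     \<and> (\<forall>v. \<forall>a\<in>A. \<forall>b\<in>A. in_arc v a \<and> in_arc v b \<longrightarrow> a = b)
     \<and> \<not> (\<exists>i1 j1 i2 j2. (i1,j1) \<in> A \<and> (i2,j2) \<in> A \<and> i1 < i2 \<and> i2 < j1 \<and> j1 < j2)"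

definition rna_2nc :: "nat \<Rightarrow> (nat \<times> nat) set \<Rightarrow> bool" where
  "rna_2nc n A \<longleftrightarrow> two_noncrossing n A \<and> (\<forall>i. (i, i+1) \<notin> A)"

definition isolated :: "nat \<Rightarrow> (nat \<times> nat) set \<Rightarrow> nat set" where
  "isolated n A = {v \<in> {1..n}. \<not> (\<exists>a\<in>A. in_arc v a)}"

definition S2 :: "nat \<Rightarrow> nat \<Rightarrow> nat" where
  "S2 n l = card {A. rna_2nc n A \<and> card (isolated n A) = l}"

end

theory Submission
  imports Defs
begin

text \<open>
  Read a structure on \<open>{1..n}\<close> from left to right. After the first \<open>n\<close> vertices one sees a
  partial structure: finished arcs, isolated vertices, and \<open>k\<close> open left endpoints still
  waiting for a partner; noncrossing forces every open endpoint to lie outside all finished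
  arcs, and a new vertex may only close the rightmost open endpoint. Counting partial
  structures by length \<open>n\<close>, open endpoints \<open>k\<close> and remaining isolated vertices \<open>d\<close> (with a flag
  recording whether vertex \<open>n\<close> itself is open, to forbid arcs \<open>(i, i+1)\<close>) gives a pair of
  first-order recurrences in \<open>n\<close>. They are solved by explicit 2-by-2 determinants of
  binomial coefficients, checked against the recurrences by Pascal's rule. For \<open>k = 0\<close>
  the determinant collapses on the diagonal to the Narayana-type product of the theorem,
  from which the three-term recurrence follows by absorption identities.
\<close>

section \<open>Arc-wise description of RNA structures\<close>

lemma rna_2nc_iff:
  "rna_2nc n A \<longleftrightarrow>
     (\<forall>(i,j)\<in>A. 1 \<le> i \<and> Suc i < j \<and> j \<le> n) \<and>
     (\<forall>(i,j)\<in>A. \<forall>(i',j')\<in>A. (i = i' \<or> i = j' \<or> j = i' \<or> j = j') \<longrightarrow> i = i' \<and> j = j') \<and>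
     (\<forall>(i,j)\<in>A. \<forall>(i',j')\<in>A. \<not> (i < i' \<and> i' < j \<and> j < j'))"
  (is "_ \<longleftrightarrow> ?bounds \<and> ?disjoint \<and> ?noncrossing")
proof
  assume rna: "rna_2nc n A"
  then have "?noncrossing"
    unfolding rna_2nc_def two_noncrossing_def by blast
  moreover have "?bounds"
  proof clarify
    fix i j assume "(i,j) \<in> A"
    moreover have "(i, i+1) \<notin> A" using rna unfolding rna_2nc_def by blast
    ultimately show "1 \<le> i \<and> Suc i < j \<and> j \<le> n"
      using rna unfolding rna_2nc_def two_noncrossing_def digraph_on_def
      by (metis (no_types, lifting) Suc_eq_plus1 Suc_lessI case_prodD)
  qed
  moreover have "?disjoint"
  proof clarify
    fix i j i' j' assume arcs: "(i,j) \<in> A" "(i',j') \<in> A" "i = i' \<or> i = j' \<or> j = i' \<or> j = j'"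
    then obtain v where "in_arc v (i,j)" "in_arc v (i',j')" unfolding in_arc_def by auto
    with arcs rna show "i = i' \<and> j = j'"
      unfolding rna_2nc_def two_noncrossing_def by blast
  qed
  ultimately show "?bounds \<and> ?disjoint \<and> ?noncrossing" by blast
next
  assume R: "?bounds \<and> ?disjoint \<and> ?noncrossing"
  have "\<forall>v. \<forall>a\<in>A. \<forall>b\<in>A. in_arc v a \<and> in_arc v b \<longrightarrow> a = b"
  proof (intro allI ballI impI)
    fix v a b assume "a \<in> A" "b \<in> A" "in_arc v a \<and> in_arc v b"
    then show "a = b" using R unfolding in_arc_def
      by (smt (verit, best) case_prodE prod.sel)
  qed
  moreover have "digraph_on n A" "\<forall>i. (i, i+1) \<notin> A"
    using R unfolding digraph_on_def by fastforce+
  ultimately show "rna_2nc n A"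
    unfolding rna_2nc_def two_noncrossing_def using R by blast
qed

lemma rna_2nc_arcD: "rna_2nc n A \<Longrightarrow> (i,j) \<in> A \<Longrightarrow> 1 \<le> i \<and> Suc i < j \<and> j \<le> n"
  unfolding rna_2nc_iff by blast

lemma rna_2nc_shared_endpointD:
  "rna_2nc n A \<Longrightarrow> (i,j) \<in> A \<Longrightarrow> (i',j') \<in> A \<Longrightarrow> i = i' \<or> i = j' \<or> j = i' \<or> j = j' \<Longrightarrow> i = i' \<and> j = j'"
  unfolding rna_2nc_iff by blast

lemma rna_2nc_crossingD:
  "rna_2nc n A \<Longrightarrow> (i,j) \<in> A \<Longrightarrow> (i',j') \<in> A \<Longrightarrow> i < i' \<Longrightarrow> i' < j \<Longrightarrow> j < j' \<Longrightarrow> False"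
  unfolding rna_2nc_iff by blast

lemma rna_2nc_subset: "rna_2nc n A \<Longrightarrow> B \<subseteq> A \<Longrightarrow> rna_2nc n B"
  unfolding rna_2nc_def two_noncrossing_def digraph_on_def by blast

lemma rna_2nc_mono: "rna_2nc m A \<Longrightarrow> m \<le> n \<Longrightarrow> rna_2nc n A"
  unfolding rna_2nc_def two_noncrossing_def digraph_on_def by fastforce

lemma rna_2nc_restrict: "rna_2nc (Suc m) A \<Longrightarrow> \<forall>(i,j)\<in>A. j \<noteq> Suc m \<Longrightarrow> rna_2nc m A"
  unfolding rna_2nc_def two_noncrossing_def digraph_on_def by (fastforce simp: le_Suc_eq)

lemma isolated_Suc_minus: "isolated (Suc m) A - {Suc m} = isolated m A"
  unfolding isolated_def by auto

lemma isolated_Suc_unpaired: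
  "\<forall>(i,j)\<in>A. i \<noteq> Suc m \<and> j \<noteq> Suc m \<Longrightarrow> isolated (Suc m) A = insert (Suc m) (isolated m A)"
  unfolding isolated_def in_arc_def by (auto simp: le_Suc_eq)

lemma isolated_insert_arc: "isolated n (insert (i,j) A) = isolated n A - {i,j}"
  unfolding isolated_def in_arc_def by auto

lemma finite_isolated: "finite (isolated n A)"
  unfolding isolated_def by simp

lemma rna_2nc_insert_arc:
  assumes rna: "rna_2nc m A" and "1 \<le> j" "j < m" and outside: "\<forall>(i,l)\<in>A. j \<notin> {i..l}"
  shows "rna_2nc (Suc m) (insert (j, Suc m) A)"
proof -
  have bounds: "1 \<le> i \<and> Suc i < l \<and> l \<le> m" if "(i,l) \<in> A" for i l
    using rna_2nc_arcD[OF rna that] .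
  have apart: "j \<noteq> i \<and> j \<noteq> l \<and> \<not> (i < j \<and> j < l)" if "(i,l) \<in> A" for i l
  proof -
    have "j \<notin> {i..l}" using outside that by blast
    then show ?thesis using bounds[OF that] by auto
  qed
  have new_bounds: "1 \<le> j \<and> Suc j < Suc m \<and> Suc m \<le> Suc m"
    using \<open>1 \<le> j\<close> \<open>j < m\<close> by simp
  show ?thesis unfolding rna_2nc_iff
  proof (intro conjI ballI; clarify)
    fix i l assume "(i,l) \<in> insert (j, Suc m) A"
    then show "1 \<le> i \<and> Suc i < l \<and> l \<le> Suc m"
      using bounds new_bounds by (metis insert_iff le_SucI prod.inject)
  next
    fix i l i' l' assume arcs: "(i,l) \<in> insert (j, Suc m) A" "(i',l') \<in> insert (j, Suc m) A"
      and shared: "i = i' \<or> i = l' \<or> l = i' \<or> l = l'"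
    show "i = i' \<and> l = l'"
    proof (cases "(i,l) \<in> A"; cases "(i',l') \<in> A")
      assume "(i,l) \<in> A" "(i',l') \<in> A"
      then show ?thesis using rna_2nc_shared_endpointD[OF rna _ _ shared] by blast
    qed (use arcs shared bounds apart in fastforce)+
  next
    fix i l i' l' assume arcs: "(i,l) \<in> insert (j, Suc m) A" "(i',l') \<in> insert (j, Suc m) A"
      and crossing: "i < i'" "i' < l" "l < l'"
    show False
    proof (cases "(i,l) \<in> A"; cases "(i',l') \<in> A")
      assume "(i,l) \<in> A" "(i',l') \<in> A"
      then show ?thesis using rna_2nc_crossingD[OF rna _ _ crossing] by blast
    qed (use arcs crossing bounds apart in fastforce)+
  qed
qed

section \<open>Partial structures\<close>

text \<open>
  \<open>Q\<close> is the set of open left endpoints, whose partners lie beyond \<open>n\<close>; an open endpoint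
  may be neither on nor under a finished arc.
\<close>
definition partial_rna :: "nat \<Rightarrow> (nat \<times> nat) set \<Rightarrow> nat set \<Rightarrow> bool" where
  "partial_rna n A Q \<longleftrightarrow> rna_2nc n A \<and> Q \<subseteq> {1..n} \<and> (\<forall>v\<in>Q. \<forall>(i,j)\<in>A. v \<notin> {i..j})"

definition partials :: "nat \<Rightarrow> nat \<Rightarrow> nat \<Rightarrow> ((nat \<times> nat) set \<times> nat set) set" where
  "partials n k d = {(A,Q). partial_rna n A Q \<and> card Q = k \<and> card (isolated n A - Q) = d}"

definition partials_closed_end :: "nat \<Rightarrow> nat \<Rightarrow> nat \<Rightarrow> ((nat \<times> nat) set \<times> nat set) set" where
  "partials_closed_end n k d = {(A,Q) \<in> partials n k d. n \<notin> Q}"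

lemma finite_partials: "finite (partials n k d)"
proof (rule finite_subset)
  show "partials n k d \<subseteq> Pow ({1..n} \<times> {1..n}) \<times> Pow {1..n}"
    unfolding partials_def partial_rna_def using rna_2nc_arcD by fastforce
qed auto

lemma partial_rnaD:
  assumes "partial_rna n A Q"
  shows "rna_2nc n A" "finite Q" "Q \<subseteq> {1..n}" "v \<in> Q \<Longrightarrow> (i,j) \<in> A \<Longrightarrow> v < i \<or> j < v"
  using assms finite_subset unfolding partial_rna_def by fastforce+

lemma partial_rna_open_end:
  assumes "Suc m \<notin> Q"
  shows "partial_rna (Suc m) A (insert (Suc m) Q) \<longleftrightarrow> partial_rna m A Q"
proof
  assume partial: "partial_rna (Suc m) A (insert (Suc m) Q)"
  have "j \<noteq> Suc m" if "(i,j) \<in> A" for i j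
    using partial_rnaD(4)[OF partial insertI1 that] rna_2nc_arcD[OF partial_rnaD(1)[OF partial] that] by auto
  then have "rna_2nc m A"
    using rna_2nc_restrict partial_rnaD(1)[OF partial] by blast
  with partial assms show "partial_rna m A Q"
    unfolding partial_rna_def by (auto simp: le_Suc_eq)
next
  assume partial: "partial_rna m A Q"
  have "Suc m \<notin> {i..j}" if "(i,j) \<in> A" for i j
    using rna_2nc_arcD[OF partial_rnaD(1)[OF partial] that] by simp
  with partial show "partial_rna (Suc m) A (insert (Suc m) Q)"
    unfolding partial_rna_def using rna_2nc_mono by fastforce
qed

lemma card_partials_open_end:
  "card {(A,Q) \<in> partials (Suc m) (Suc k) d. Suc m \<in> Q} = card (partials m k d)"
proof -
  let ?open = "\<lambda>(A, Q). (A, insert (Suc m) Q)"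
  have fresh: "Suc m \<notin> Q" if "(A,Q) \<in> partials m k d" for A Q
    using that partial_rnaD(3) unfolding partials_def by fastforce
  have member: "(A, insert (Suc m) Q) \<in> partials (Suc m) (Suc k) d \<longleftrightarrow> (A,Q) \<in> partials m k d"
    if "Suc m \<notin> Q" for A Q
  proof -
    have "isolated (Suc m) A - insert (Suc m) Q = isolated m A - Q"
      using isolated_Suc_minus by blast
    moreover have "finite Q \<Longrightarrow> card (insert (Suc m) Q) = Suc (card Q)"
      using that by simp
    ultimately show ?thesis
      unfolding partials_def using partial_rna_open_end[OF that] partial_rnaD(2) by auto
  qed
  have "{(A,Q) \<in> partials (Suc m) (Suc k) d. Suc m \<in> Q} = ?open ` partials m k d"
  proof safe
    fix A Q assume "(A,Q) \<in> partials (Suc m) (Suc k) d" "Suc m \<in> Q"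
    then have "(A, Q - {Suc m}) \<in> partials m k d" "Q = insert (Suc m) (Q - {Suc m})"
      using member[of "Q - {Suc m}" A] by (auto simp: insert_absorb)
    then show "(A,Q) \<in> ?open ` partials m k d" by force
  qed (use fresh member in auto)
  moreover have "inj_on ?open (partials m k d)"
  proof (rule inj_onI)
    fix x y assume "x \<in> partials m k d" "y \<in> partials m k d" "?open x = ?open y"
    then show "x = y" using fresh by (cases x, cases y) (auto simp: insert_ident)
  qed
  ultimately show ?thesis by (simp add: card_image)
qed

lemma partial_rna_dot_end:
  assumes "Suc m \<notin> Q" "\<forall>(i,j)\<in>A. j \<noteq> Suc m"
  shows "partial_rna (Suc m) A Q \<longleftrightarrow> partial_rna m A Q"
proof -
  have "rna_2nc (Suc m) A \<longleftrightarrow> rna_2nc m A"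
    using assms(2) rna_2nc_restrict rna_2nc_mono[of m A "Suc m"] by auto
  moreover have "Q \<subseteq> {1..Suc m} \<longleftrightarrow> Q \<subseteq> {1..m}"
    using assms(1) by (auto simp: le_Suc_eq)
  ultimately show ?thesis unfolding partial_rna_def by simp
qed

lemma card_isolated_dot_end:
  assumes partial: "partial_rna m A Q"
  shows "card (isolated (Suc m) A - Q) = Suc (card (isolated m A - Q))"
proof -
  have "\<forall>(i,j)\<in>A. i \<noteq> Suc m \<and> j \<noteq> Suc m"
    using rna_2nc_arcD[OF partial_rnaD(1)[OF partial]] by fastforce
  then have "isolated (Suc m) A - Q = insert (Suc m) (isolated m A - Q)"
    using isolated_Suc_unpaired partial_rnaD(3)[OF partial] by fastforce
  moreover have "Suc m \<notin> isolated m A" unfolding isolated_def by simp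
  ultimately show ?thesis using finite_isolated by simp
qed

lemma card_partials_dot_end:
  "card {(A,Q) \<in> partials_closed_end (Suc m) k d. \<forall>(i,j)\<in>A. j \<noteq> Suc m} =
     (if d = 0 then 0 else card (partials m k (d - 1)))"
proof -
  have "(A,Q) \<in> partials_closed_end (Suc m) k d \<and> (\<forall>(i,j)\<in>A. j \<noteq> Suc m) \<longleftrightarrow>
        d \<noteq> 0 \<and> (A,Q) \<in> partials m k (d - 1)" for A Q
  proof
    assume "(A,Q) \<in> partials_closed_end (Suc m) k d \<and> (\<forall>(i,j)\<in>A. j \<noteq> Suc m)"
    then have "partial_rna m A Q" "card Q = k" "card (isolated (Suc m) A - Q) = d"
      using partial_rna_dot_end unfolding partials_closed_end_def partials_def by auto
    then show "d \<noteq> 0 \<and> (A,Q) \<in> partials m k (d - 1)"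
      unfolding partials_def using card_isolated_dot_end by auto
  next
    assume dot: "d \<noteq> 0 \<and> (A,Q) \<in> partials m k (d - 1)"
    then have partial: "partial_rna m A Q" unfolding partials_def by blast
    then have "Suc m \<notin> Q" "\<forall>(i,j)\<in>A. j \<noteq> Suc m"
      using partial_rnaD(3) rna_2nc_arcD[OF partial_rnaD(1)[OF partial]] by fastforce+
    with dot partial show "(A,Q) \<in> partials_closed_end (Suc m) k d \<and> (\<forall>(i,j)\<in>A. j \<noteq> Suc m)"
      unfolding partials_closed_end_def partials_def
      using partial_rna_dot_end card_isolated_dot_end[OF partial] by auto
  qed
  then have "{(A,Q) \<in> partials_closed_end (Suc m) k d. \<forall>(i,j)\<in>A. j \<noteq> Suc m} =
      (if d = 0 then {} else partials m k (d - 1))"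
    by auto
  then show ?thesis by simp
qed

lemma partial_rna_close_arc:
  assumes partial: "partial_rna m A Q" and "m \<notin> Q" "Q \<noteq> {}"
  shows "partial_rna (Suc m) (insert (Max Q, Suc m) A) (Q - {Max Q})"
proof -
  have Q: "finite Q" "Q \<subseteq> {1..m}" using partial_rnaD(2,3)[OF partial] .
  have max: "Max Q \<in> Q" using Q \<open>Q \<noteq> {}\<close> by simp
  then have "1 \<le> Max Q" "Max Q < m" using Q \<open>m \<notin> Q\<close> by (auto simp: order.order_iff_strict)
  moreover have "\<forall>(i,l)\<in>A. Max Q \<notin> {i..l}"
    using partial max unfolding partial_rna_def by blast
  ultimately have "rna_2nc (Suc m) (insert (Max Q, Suc m) A)"
    using rna_2nc_insert_arc partial_rnaD(1)[OF partial] by blast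
  moreover have "Q - {Max Q} \<subseteq> {1..Suc m}" using Q by auto
  moreover have "v \<notin> {i..l}" if "v \<in> Q - {Max Q}" "(i,l) \<in> insert (Max Q, Suc m) A" for v i l
  proof (cases "(i,l) \<in> A")
    case True
    then show ?thesis using partial that(1) unfolding partial_rna_def by blast
  next
    case False
    then have "i = Max Q" using that(2) by blast
    moreover have "v \<le> Max Q" "v \<noteq> Max Q" using that(1) Q by auto
    ultimately show ?thesis by simp
  qed
  ultimately show ?thesis
    unfolding partial_rna_def by blast
qed

lemma partial_rna_open_arc:
  assumes partial: "partial_rna (Suc m) A Q" and arc: "(j, Suc m) \<in> A"
  shows "partial_rna m (A - {(j, Suc m)}) (insert j Q)" "m \<notin> insert j Q" "\<forall>v\<in>Q. v < j"
proof -
  have rna: "rna_2nc (Suc m) A" using partial_rnaD(1)[OF partial] .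
  have j: "1 \<le> j" "j < m" using rna_2nc_arcD[OF rna arc] by auto
  have "v < j" if "v \<in> Q" for v
    using partial_rnaD(3)[OF partial] partial_rnaD(4)[OF partial that arc] that by fastforce
  then show before: "\<forall>v\<in>Q. v < j" by blast
  with j show "m \<notin> insert j Q" by auto
  have other_arc: "l \<noteq> Suc m \<and> j \<noteq> i \<and> j \<noteq> l" if "(i,l) \<in> A - {(j, Suc m)}" for i l
    using that rna_2nc_shared_endpointD[OF rna _ arc] by blast
  have "rna_2nc m (A - {(j, Suc m)})"
    using rna_2nc_restrict[OF rna_2nc_subset[OF rna]] other_arc by blast
  moreover have "j \<notin> {i..l}" if "(i,l) \<in> A - {(j, Suc m)}" for i l
  proof
    assume "j \<in> {i..l}"
    moreover have "l \<le> Suc m" using rna_2nc_arcD[OF rna] that by blast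
    ultimately show False
      using other_arc[OF that] rna_2nc_crossingD[OF rna _ arc] that by fastforce
  qed
  moreover have "insert j Q \<subseteq> {1..m}"
    using partial_rnaD(3)[OF partial] before j by fastforce
  moreover have "\<forall>v\<in>Q. \<forall>(i,l)\<in>A - {(j, Suc m)}. v \<notin> {i..l}"
    using partial unfolding partial_rna_def by blast
  ultimately show "partial_rna m (A - {(j, Suc m)}) (insert j Q)"
    unfolding partial_rna_def by blast
qed

lemma isolated_close_arc:
  assumes "partial_rna m A Q" "j \<in> Q"
  shows "isolated (Suc m) (insert (j, Suc m) A) - (Q - {j}) = isolated m A - Q"
proof -
  have "\<forall>(i,l)\<in>A. i \<noteq> Suc m \<and> l \<noteq> Suc m"
    using rna_2nc_arcD[OF partial_rnaD(1)[OF assms(1)]] by fastforce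
  then have "isolated (Suc m) (insert (j, Suc m) A) = insert (Suc m) (isolated m A) - {j, Suc m}"
    unfolding isolated_insert_arc by (simp add: isolated_Suc_unpaired)
  also have "\<dots> = isolated m A - {j}"
    unfolding isolated_def by auto
  finally show ?thesis using assms(2) by blast
qed

lemma partials_Max_mem: "(A,Q) \<in> partials n (Suc k) d \<Longrightarrow> Max Q \<in> Q"
  unfolding partials_def using partial_rnaD(2) by (fastforce intro: Max_in)

text \<open>Only the rightmost open endpoint can be joined to the new vertex without crossing.\<close>
definition close_last_arc :: "nat \<Rightarrow> (nat \<times> nat) set \<times> nat set \<Rightarrow> (nat \<times> nat) set \<times> nat set" where
  "close_last_arc m = (\<lambda>(A, Q). (insert (Max Q, Suc m) A, Q - {Max Q}))"

lemma close_last_arc_mem: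
  assumes member: "(A,Q) \<in> partials_closed_end m (Suc k) d"
  shows "close_last_arc m (A,Q) \<in> partials_closed_end (Suc m) k d"
proof -
  from member have partial: "partial_rna m A Q" and "m \<notin> Q" "card Q = Suc k"
    "card (isolated m A - Q) = d"
    unfolding partials_closed_end_def partials_def by auto
  have max: "Max Q \<in> Q"
    using member partials_Max_mem unfolding partials_closed_end_def by blast
  then have "partial_rna (Suc m) (insert (Max Q, Suc m) A) (Q - {Max Q})"
    using partial_rna_close_arc partial \<open>m \<notin> Q\<close> by blast
  moreover have "card (Q - {Max Q}) = k"
    using \<open>card Q = Suc k\<close> max by simp
  moreover have "Suc m \<notin> Q - {Max Q}" using partial_rnaD(3)[OF partial] by auto
  moreover note isolated_close_arc[OF partial max]
  ultimately show ?thesis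
    using \<open>card (isolated m A - Q) = d\<close>
    unfolding close_last_arc_def partials_closed_end_def partials_def by simp
qed

lemma close_last_arc_preimage:
  assumes member: "(A,Q) \<in> partials_closed_end (Suc m) k d" and arc: "(j, Suc m) \<in> A"
  shows "(A,Q) \<in> close_last_arc m ` partials_closed_end m (Suc k) d"
proof -
  from member have partial: "partial_rna (Suc m) A Q" and "card Q = k"
    "card (isolated (Suc m) A - Q) = d"
    unfolding partials_closed_end_def partials_def by auto
  note opened = partial_rna_open_arc[OF partial arc]
  have "finite Q" using partial_rnaD(2)[OF partial] .
  have "j \<notin> Q" using opened(3) by blast
  have max: "Max (insert j Q) = j"
    using \<open>finite Q\<close> opened(3) by (simp add: Max_insert2 less_imp_le)
  have "card (insert j Q) = Suc k"
    using \<open>finite Q\<close> \<open>j \<notin> Q\<close> \<open>card Q = k\<close> by simp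
  moreover have "isolated m (A - {(j, Suc m)}) - insert j Q = isolated (Suc m) A - Q"
  proof -
    have "insert (j, Suc m) (A - {(j, Suc m)}) = A" "insert j Q - {j} = Q"
      using arc \<open>j \<notin> Q\<close> by auto
    then show ?thesis using isolated_close_arc[OF opened(1) insertI1] by simp
  qed
  ultimately have preimage: "(A - {(j, Suc m)}, insert j Q) \<in> partials_closed_end m (Suc k) d"
    using opened(1,2) \<open>card (isolated (Suc m) A - Q) = d\<close>
    unfolding partials_closed_end_def partials_def by simp
  have "close_last_arc m (A - {(j, Suc m)}, insert j Q) = (A,Q)"
    unfolding close_last_arc_def using max arc \<open>j \<notin> Q\<close> by auto
  from image_eqI[where f = "close_last_arc m", OF this[symmetric] preimage] show ?thesis .
qed

lemma inj_on_close_last_arc: "inj_on (close_last_arc m) (partials_closed_end m (Suc k) d)"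
proof (rule inj_onI, clarify)
  fix A Q A' Q'
  assume member: "(A,Q) \<in> partials_closed_end m (Suc k) d" "(A',Q') \<in> partials_closed_end m (Suc k) d"
    and "close_last_arc m (A,Q) = close_last_arc m (A',Q')"
  then have A: "insert (Max Q, Suc m) A = insert (Max Q', Suc m) A'"
    and Q: "Q - {Max Q} = Q' - {Max Q'}"
    unfolding close_last_arc_def by auto
  have partial: "partial_rna m A Q" "partial_rna m A' Q'"
    using member unfolding partials_closed_end_def partials_def by auto
  have unpaired: "(i, Suc m) \<notin> A" "(i, Suc m) \<notin> A'" for i
    using rna_2nc_arcD[OF partial_rnaD(1)[OF partial(1)]]
      rna_2nc_arcD[OF partial_rnaD(1)[OF partial(2)]] by fastforce+
  have "Max Q \<in> Q" "Max Q' \<in> Q'"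
    using member partials_Max_mem unfolding partials_closed_end_def by blast+
  moreover have "Max Q = Max Q'" using A unpaired(2) by blast
  ultimately show "A = A' \<and> Q = Q'"
    using A Q unpaired by (metis insert_Diff insert_ident)
qed

lemma card_partials_close_end:
  "card {(A,Q) \<in> partials_closed_end (Suc m) k d. \<exists>i. (i, Suc m) \<in> A} =
     card (partials_closed_end m (Suc k) d)"
proof -
  have "{(A,Q) \<in> partials_closed_end (Suc m) k d. \<exists>i. (i, Suc m) \<in> A} =
      close_last_arc m ` partials_closed_end m (Suc k) d"
  proof (intro equalityI subsetI)
    fix x assume "x \<in> {(A,Q) \<in> partials_closed_end (Suc m) k d. \<exists>i. (i, Suc m) \<in> A}"
    then show "x \<in> close_last_arc m ` partials_closed_end m (Suc k) d"
      using close_last_arc_preimage by blast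
  next
    fix x assume "x \<in> close_last_arc m ` partials_closed_end m (Suc k) d"
    then obtain A Q where "(A,Q) \<in> partials_closed_end m (Suc k) d" "x = close_last_arc m (A,Q)"
      by auto
    then show "x \<in> {(A,Q) \<in> partials_closed_end (Suc m) k d. \<exists>i. (i, Suc m) \<in> A}"
      using close_last_arc_mem unfolding close_last_arc_def by auto
  qed
  then show ?thesis using inj_on_close_last_arc by (simp add: card_image)
qed

lemma card_partials_Suc:
  "card (partials (Suc m) k d) =
     (if k = 0 then 0 else card (partials m (k - 1) d)) + card (partials_closed_end (Suc m) k d)"
proof -
  let ?open = "{(A,Q) \<in> partials (Suc m) k d. Suc m \<in> Q}"
  have "partials (Suc m) k d = ?open \<union> partials_closed_end (Suc m) k d"
    unfolding partials_closed_end_def by auto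
  moreover have "card (?open \<union> partials_closed_end (Suc m) k d) =
      card ?open + card (partials_closed_end (Suc m) k d)"
    by (rule card_Un_disjoint)
      (auto simp: partials_closed_end_def intro: finite_subset[OF _ finite_partials])
  moreover have "card ?open = (if k = 0 then 0 else card (partials m (k - 1) d))"
  proof (cases k)
    case 0
    have "?open = {}"
      using partial_rnaD(2) unfolding partials_def 0 by fastforce
    then have "card ?open = 0" by (metis card.empty)
    with 0 show ?thesis by simp
  next
    case (Suc k')
    then show ?thesis using card_partials_open_end by simp
  qed
  ultimately show ?thesis by simp
qed

lemma card_partials_closed_end_Suc:
  "card (partials_closed_end (Suc m) k d) =
     (if d = 0 then 0 else card (partials m k (d - 1))) + card (partials_closed_end m (Suc k) d)"
proof -
  let ?dot = "{(A,Q) \<in> partials_closed_end (Suc m) k d. \<forall>(i,j)\<in>A. j \<noteq> Suc m}"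
  let ?arc = "{(A,Q) \<in> partials_closed_end (Suc m) k d. \<exists>i. (i, Suc m) \<in> A}"
  have "partials_closed_end (Suc m) k d = ?dot \<union> ?arc"
    by auto
  moreover have "card (?dot \<union> ?arc) = card ?dot + card ?arc"
    by (rule card_Un_disjoint)
      (auto simp: partials_closed_end_def intro: finite_subset[OF _ finite_partials])
  ultimately show ?thesis
    using card_partials_dot_end card_partials_close_end by simp
qed

lemma partial_rna_0_iff: "partial_rna 0 A Q \<longleftrightarrow> A = {} \<and> Q = {}"
proof
  assume partial: "partial_rna 0 A Q"
  have "A = {}" using rna_2nc_arcD[OF partial_rnaD(1)[OF partial]] by fastforce
  moreover have "Q = {}" using partial_rnaD(3)[OF partial] by auto
  ultimately show "A = {} \<and> Q = {}" ..
qed (simp add: partial_rna_def rna_2nc_iff)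

lemma card_partials_0: "card (partials 0 k d) = (if k = 0 \<and> d = 0 then 1 else 0)"
proof -
  have "isolated 0 {} = {}" unfolding isolated_def by simp
  then have "partials 0 k d = (if k = 0 \<and> d = 0 then {({},{})} else {})"
    unfolding partials_def partial_rna_0_iff by auto
  then show ?thesis by simp
qed

lemma partials_closed_end_0: "partials_closed_end 0 k d = partials 0 k d"
  unfolding partials_closed_end_def partials_def partial_rna_0_iff by auto

lemma S2_eq_card_partials_closed_end: "S2 n l = card (partials_closed_end n 0 l)"
proof -
  let ?S = "{A. rna_2nc n A \<and> card (isolated n A) = l}"
  have member_iff: "(A,Q) \<in> partials_closed_end n 0 l \<longleftrightarrow> A \<in> ?S \<and> Q = {}" for A Q
  proof
    assume member: "(A,Q) \<in> partials_closed_end n 0 l"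
    then have partial: "partial_rna n A Q" and "card Q = 0" "card (isolated n A - Q) = l"
      unfolding partials_closed_end_def partials_def by auto
    moreover have "Q = {}" using partial_rnaD(2)[OF partial] \<open>card Q = 0\<close> by simp
    ultimately show "A \<in> ?S \<and> Q = {}" using partial_rnaD(1) by simp
  next
    assume "A \<in> ?S \<and> Q = {}"
    then show "(A,Q) \<in> partials_closed_end n 0 l"
      unfolding partials_closed_end_def partials_def partial_rna_def by simp
  qed
  have "partials_closed_end n 0 l = (\<lambda>A. (A, {})) ` ?S"
  proof (intro equalityI subsetI)
    fix x assume "x \<in> partials_closed_end n 0 l"
    moreover obtain A Q where "x = (A,Q)" by (cases x)
    ultimately show "x \<in> (\<lambda>A. (A, {})) ` ?S" using member_iff by simp
  qed (use member_iff in auto)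
  moreover have "inj_on (\<lambda>A. (A, {} :: nat set)) ?S" by (simp add: inj_on_def)
  ultimately show ?thesis
    unfolding S2_def by (simp add: card_image)
qed

section \<open>Binomial closed forms\<close>

text \<open>
  \<open>n choose (k - 1)\<close> with the convention that it vanishes for \<open>k = 0\<close>, where the truncated
  subtraction would give \<open>n choose 0 = 1\<close>.
\<close>
definition choose_pred :: "nat \<Rightarrow> nat \<Rightarrow> nat" where
  "choose_pred n k = (if k = 0 then 0 else n choose (k - 1))"

lemma Suc_choose_eq: "Suc n choose k = choose_pred n k + (n choose k)"
  unfolding choose_pred_def by (cases k) auto

lemma choose_pred_Suc [simp]: "choose_pred n (Suc k) = n choose k"
  unfolding choose_pred_def by simp

lemma choose_pred_0 [simp]: "choose_pred n 0 = 0"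
  unfolding choose_pred_def by simp

text \<open>
  With \<open>a\<close> finished arcs and \<open>k\<close> open endpoints, \<open>card (partials (2 * a + k + d) k d)\<close>
  is \<open>partials_binom (a + k) a d\<close>, and likewise for \<open>partials_closed_end\<close> and
  \<open>closed_end_binom\<close>.
\<close>
fun partials_binom :: "nat \<Rightarrow> nat \<Rightarrow> nat \<Rightarrow> int" where
  "partials_binom p q 0 = (if q = 0 then 1 else 0)"
| "partials_binom p q (Suc e) =
     int (Suc (p + e) choose Suc e) * int (q + e choose e)
     - int (Suc (p + e) choose e) * int (q + e choose Suc e)"

fun closed_end_binom :: "nat \<Rightarrow> nat \<Rightarrow> nat \<Rightarrow> int" where
  "closed_end_binom p q 0 = (if p = 0 then 1 else 0)"
| "closed_end_binom p q (Suc e) =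
     int (p + e choose e) * int (q + e choose e)
     - int (choose_pred (p + e) e) * int (q + e choose Suc e)"

lemma partials_binom_Suc_left:
  "partials_binom (Suc p) q d = partials_binom p q d + closed_end_binom (Suc p) q d"
proof (cases d)
  case (Suc e)
  have "partials_binom (Suc p) q d =
      int ((Suc p + e choose e) + (Suc p + e choose Suc e)) * int (q + e choose e)
      - int (choose_pred (Suc p + e) e + (Suc p + e choose e)) * int (q + e choose Suc e)"
    unfolding Suc partials_binom.simps
    by (metis Suc_choose_eq add_Suc add_Suc_shift choose_pred_Suc add.commute)
  then show ?thesis using Suc by (simp add: algebra_simps)
qed simp

lemma partials_binom_diag: "partials_binom q q d = closed_end_binom q q d"
proof (cases d)
  case (Suc e)
  have "partials_binom q q d =
      int ((q + e choose e) + (q + e choose Suc e)) * int (q + e choose e)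
      - int (choose_pred (q + e) e + (q + e choose e)) * int (q + e choose Suc e)"
    unfolding Suc partials_binom.simps
    by (metis Suc_choose_eq choose_pred_Suc add.commute)
  then show ?thesis using Suc by (simp add: algebra_simps)
qed simp

lemma closed_end_binom_Suc_right:
  "closed_end_binom p (Suc q) (Suc e) = partials_binom p (Suc q) e + closed_end_binom p q (Suc e)"
proof -
  have "closed_end_binom p (Suc q) (Suc e) =
      int (p + e choose e) * int (choose_pred (q + e) e + (q + e choose e))
      - int (choose_pred (p + e) e) * int ((q + e choose e) + (q + e choose Suc e))"
    by (simp only: closed_end_binom.simps add_Suc Suc_choose_eq choose_pred_Suc)
  then show ?thesis
    by (cases e) (simp_all add: algebra_simps)
qed

lemma closed_end_binom_0_right: "closed_end_binom p 0 (Suc e) = partials_binom p 0 e"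
  by (cases e) simp_all

definition partials_count :: "nat \<Rightarrow> nat \<Rightarrow> nat \<Rightarrow> int" where
  "partials_count n k d =
     (if \<exists>a. n = 2 * a + k + d then partials_binom ((n - k - d) div 2 + k) ((n - k - d) div 2) d else 0)"

definition closed_end_count :: "nat \<Rightarrow> nat \<Rightarrow> nat \<Rightarrow> int" where
  "closed_end_count n k d =
     (if \<exists>a. n = 2 * a + k + d then closed_end_binom ((n - k - d) div 2 + k) ((n - k - d) div 2) d else 0)"

lemma partials_count_eq: "partials_count (2 * a + k + d) k d = partials_binom (a + k) a d"
  unfolding partials_count_def by auto

lemma closed_end_count_eq: "closed_end_count (2 * a + k + d) k d = closed_end_binom (a + k) a d"
  unfolding closed_end_count_def by auto

lemma partials_count_eq_0: "\<nexists>a. n = 2 * a + k + d \<Longrightarrow> partials_count n k d = 0"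
  unfolding partials_count_def by simp

lemma closed_end_count_eq_0: "\<nexists>a. n = 2 * a + k + d \<Longrightarrow> closed_end_count n k d = 0"
  unfolding closed_end_count_def by simp

lemma partials_count_0: "partials_count 0 k d = (if k = 0 \<and> d = 0 then 1 else 0)"
  unfolding partials_count_def by auto

lemma closed_end_count_0: "closed_end_count 0 k d = (if k = 0 \<and> d = 0 then 1 else 0)"
  unfolding closed_end_count_def by auto

lemma partials_count_Suc:
  "partials_count (Suc m) k d =
     (if k = 0 then 0 else partials_count m (k - 1) d) + closed_end_count (Suc m) k d"
proof (cases "\<exists>a. Suc m = 2 * a + k + d")
  case True
  then obtain a where n: "Suc m = 2 * a + k + d" by blast
  show ?thesis
  proof (cases k)
    case 0
    then show ?thesis
      unfolding n using partials_binom_diag[of a d] partials_count_eq[of a 0 d] closed_end_count_eq[of a 0 d]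
      by (simp del: partials_binom.simps closed_end_binom.simps)
  next
    case (Suc k')
    then have "m = 2 * a + k' + d" using n by simp
    then show ?thesis
      unfolding n using Suc partials_binom_Suc_left[of "a + k'" a d]
        partials_count_eq[of a k d] closed_end_count_eq[of a k d] partials_count_eq[of a k' d]
      by (simp del: partials_binom.simps closed_end_binom.simps)
  qed
next
  case False
  then have "k \<noteq> 0 \<Longrightarrow> \<nexists>a. m = 2 * a + (k - 1) + d" by presburger
  with False show ?thesis
    using partials_count_eq_0 closed_end_count_eq_0 by simp
qed

lemma closed_end_count_Suc_0: "closed_end_count (Suc m) k 0 = 0"
  unfolding closed_end_count_def by auto

lemma closed_end_count_Suc:
  "closed_end_count (Suc m) k d =
     (if d = 0 then 0 else partials_count m k (d - 1)) + closed_end_count m (Suc k) d"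
proof (cases d)
  case 0
  then show ?thesis using closed_end_count_Suc_0 by (cases m) (simp_all add: closed_end_count_0)
next
  case (Suc e)
  show ?thesis
  proof (cases "\<exists>a. m = 2 * a + k + e")
    case True
    then obtain a where m: "m = 2 * a + k + e" by blast
    then have n: "Suc m = 2 * a + k + d" using Suc by simp
    show ?thesis
    proof (cases a)
      case 0
      have "\<nexists>b. m = 2 * b + Suc k + d" using m 0 Suc by simp
      then have "closed_end_count m (Suc k) d = 0" by (rule closed_end_count_eq_0)
      then show ?thesis
        unfolding n m using Suc \<open>a = 0\<close> closed_end_binom_0_right[of k e]
          partials_count_eq[of a k e] closed_end_count_eq[of a k d]
        by (simp del: partials_binom.simps closed_end_binom.simps)
    next
      case (Suc b)
      then have "m = 2 * b + Suc k + d" using n by simp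
      then show ?thesis
        unfolding n m using \<open>d = Suc e\<close> Suc closed_end_binom_Suc_right[of "a + k" b e]
          closed_end_count_eq[of a k d] closed_end_count_eq[of b "Suc k" d] partials_count_eq[of a k e]
        by (simp del: partials_binom.simps closed_end_binom.simps)
    qed
  next
    case False
    then have "\<nexists>a. Suc m = 2 * a + k + d" "\<nexists>a. m = 2 * a + Suc k + d"
      using Suc by presburger+
    with False Suc show ?thesis
      using partials_count_eq_0 closed_end_count_eq_0 by simp
  qed
qed

lemma Suc_times_choose_Suc: "Suc k * (n choose Suc k) = (n - k) * (n choose k)"
  using binomial_absorption[of k n] binomial_absorb_comp[of n k] by simp

lemma closed_end_binom_diag_Suc:
  "int (a + 1) * closed_end_binom a a (Suc e) = int (Suc (a + e) choose a) * int (a + e choose a)"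
proof -
  define x where "x = a + e choose e"
  have x_sym: "a + e choose a = x"
    unfolding x_def using binomial_symmetric[of a "a + e"] by simp
  have "(e + 1) * (a + e choose Suc e) = a * x"
    using Suc_times_choose_Suc[of e "a + e"] unfolding x_def by simp
  then have F1: "int (e + 1) * int (a + e choose Suc e) = int a * int x"
    by (metis of_nat_mult)
  have F2: "int e * int x = int (a + 1) * int (choose_pred (a + e) e)"
  proof (cases e)
    case (Suc f)
    then have "e * x = (a + 1) * choose_pred (a + e) e"
      using Suc_times_choose_Suc[of f "a + e"] unfolding x_def by (simp add: algebra_simps)
    then show ?thesis by (metis of_nat_mult)
  qed simp
  have F3: "int (e + 1) * int (Suc (a + e) choose a) = int (a + e + 1) * int x"
  proof -
    have "Suc (a + e) choose a = Suc (a + e) choose Suc e"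
      using binomial_symmetric[of a "Suc (a + e)"] by simp
    then have "(e + 1) * (Suc (a + e) choose a) = (a + e + 1) * x"
      using Suc_times_binomial[of e "a + e"] unfolding x_def by simp
    then show ?thesis by (metis of_nat_mult)
  qed
  have "int (e + 1) * (int (a + 1) * closed_end_binom a a (Suc e)) =
      int (e + 1) * int (a + 1) * int x * int x
      - (int (a + 1) * int (choose_pred (a + e) e)) * (int (e + 1) * int (a + e choose Suc e))"
    unfolding x_def by (simp add: algebra_simps)
  also have "\<dots> = int (e + 1) * int (a + 1) * int x * int x - (int e * int x) * (int a * int x)"
    unfolding F1 F2 ..
  also have "\<dots> = int (a + e + 1) * int x * int x" by (simp add: algebra_simps)
  also have "\<dots> = int (e + 1) * (int (Suc (a + e) choose a) * int (a + e choose a))"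
    using F3 x_sym by (simp add: algebra_simps)
  finally show ?thesis by simp
qed

lemma closed_end_binom_diag:
  assumes "1 \<le> a"
  shows "int a * closed_end_binom a a l = int (a + l choose (a + 1)) * int (a + l - 1 choose (a - 1))"
proof (cases l)
  case (Suc e)
  obtain a' where a': "a = Suc a'" using assms by (cases a) auto
  have "(a + 1) * (a + l choose (a + 1)) = (e + 1) * (Suc (a + e) choose a)"
    using Suc_times_choose_Suc[of a "a + l"] Suc by simp
  then have G1: "int (a + 1) * int (a + l choose (a + 1)) = int (e + 1) * int (Suc (a + e) choose a)"
    by (metis of_nat_mult)
  have "a * (a + e choose a) = (e + 1) * (a + e choose (a - 1))"
    using Suc_times_choose_Suc[of a' "a + e"] a' by simp
  then have G2: "int a * int (a + e choose a) = int (e + 1) * int (a + e choose (a - 1))"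
    by (metis of_nat_mult)
  have "int (a + 1) * (int a * closed_end_binom a a l) =
      int (Suc (a + e) choose a) * (int a * int (a + e choose a))"
    using closed_end_binom_diag_Suc[of a e] Suc by (simp add: algebra_simps)
  also have "\<dots> = (int (e + 1) * int (Suc (a + e) choose a)) * int (a + e choose (a - 1))"
    unfolding G2 by (simp add: algebra_simps)
  also have "\<dots> = int (a + 1) * (int (a + l choose (a + 1)) * int (a + l - 1 choose (a - 1)))"
    unfolding G1[symmetric] using Suc by simp
  finally show ?thesis by simp
qed (use assms in simp)

lemma closed_end_binom_diag_step:
  "int (Suc a) * int (Suc a + 1) * closed_end_binom (Suc a) (Suc a) l =
     int (Suc a + l) * int (a + l) * closed_end_binom a a l"
proof (cases l)
  case (Suc e)
  have "Suc a * (Suc a + l choose Suc a) = (Suc a + l) * (a + l choose a)"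
    using Suc_times_binomial[of a "a + l"] by simp
  then have H1: "int (Suc a) * int (Suc a + l choose Suc a) = int (Suc a + l) * int (a + l choose a)"
    by (metis of_nat_mult)
  have "Suc a * (Suc a + e choose Suc a) = (a + l) * (a + e choose a)"
    using Suc_times_binomial[of a "a + e"] Suc by simp
  then have H2: "int (Suc a) * int (Suc a + e choose Suc a) = int (a + l) * int (a + e choose a)"
    by (metis of_nat_mult)
  have KA: "int (Suc a + 1) * closed_end_binom (Suc a) (Suc a) l =
      int (Suc a + l choose Suc a) * int (Suc a + e choose Suc a)"
    using closed_end_binom_diag_Suc[of "Suc a" e] Suc by simp
  have KB: "int (a + 1) * closed_end_binom a a l = int (a + l choose a) * int (a + e choose a)"
    using closed_end_binom_diag_Suc[of a e] Suc by simp
  have "int (Suc a) * (int (Suc a) * int (Suc a + 1) * closed_end_binom (Suc a) (Suc a) l)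
      = int (Suc a) * int (Suc a) * (int (Suc a + 1) * closed_end_binom (Suc a) (Suc a) l)"
    by (simp only: mult_ac)
  also have "\<dots> = (int (Suc a) * int (Suc a + l choose Suc a)) * (int (Suc a) * int (Suc a + e choose Suc a))"
    unfolding KA by (simp only: mult_ac)
  also have "\<dots> = int (Suc a + l) * int (a + l) * (int (a + l choose a) * int (a + e choose a))"
    unfolding H1 H2 by (simp only: mult_ac)
  also have "\<dots> = int (Suc a) * (int (Suc a + l) * int (a + l) * closed_end_binom a a l)"
    unfolding KB[symmetric] by (simp add: algebra_simps)
  finally show ?thesis by simp
qed simp

section \<open>Counting RNA structures\<close>

lemma card_partials_eq_count:
  "int (card (partials n k d)) = partials_count n k d \<and>
   int (card (partials_closed_end n k d)) = closed_end_count n k d"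
proof (induction n arbitrary: k d)
  case 0
  then show ?case
    using card_partials_0 partials_closed_end_0 partials_count_0 closed_end_count_0 by simp
next
  case (Suc m)
  have closed_end: "int (card (partials_closed_end (Suc m) k d)) = closed_end_count (Suc m) k d"
    using card_partials_closed_end_Suc[of m k d] closed_end_count_Suc[of m k d] Suc.IH by simp
  then show ?case
    using card_partials_Suc[of m k d] partials_count_Suc[of m k d] Suc.IH by simp
qed

lemma S2_eq_closed_end_count: "int (S2 n l) = closed_end_count n 0 l"
  using S2_eq_card_partials_closed_end card_partials_eq_count by simp

lemma S2_diag: "int (S2 (2 * a + l) l) = closed_end_binom a a l"
  using S2_eq_closed_end_count closed_end_count_eq[of a 0 l] by simp

lemma S2_eq_0:
  assumes "\<nexists>a. n = 2 * a + l"
  shows "S2 n l = 0"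
proof -
  have "closed_end_count n 0 l = 0" using assms by (intro closed_end_count_eq_0) simp
  then show ?thesis using S2_eq_closed_end_count[of n l] by simp
qed

lemma S2_closed_form:
  assumes "1 \<le> a"
  shows "a * S2 (2 * a + l) l = (a + l choose (a + 1)) * (a + l - 1 choose (a - 1))"
proof -
  have "int (a * S2 (2 * a + l) l) = int ((a + l choose (a + 1)) * (a + l - 1 choose (a - 1)))"
    using closed_end_binom_diag[OF assms, of l] S2_diag[of a l] by simp
  then show ?thesis by (simp only: of_nat_eq_iff)
qed

lemma S2_recurrence:
  assumes "2 \<le> n"
  shows "(int n - int l) * (int n - int l + 2) * int (S2 n l) =
         (int n + int l) * (int n + int l - 2) * int (S2 (n - 2) l)"
proof (cases "\<exists>a. n = 2 * a + l")
  case True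
  then obtain a where n: "n = 2 * a + l" by blast
  show ?thesis
  proof (cases a)
    case 0
    then have "\<nexists>b. n - 2 = 2 * b + l" using n assms by auto
    then show ?thesis using S2_eq_0 n 0 by simp
  next
    case (Suc b)
    then have "n - 2 = 2 * b + l" using n by simp
    then show ?thesis
      using n Suc S2_diag[of a l] S2_diag[of b l] closed_end_binom_diag_step[of b l]
      by (simp add: algebra_simps)
  qed
next
  case False
  moreover have "\<nexists>b. n - 2 = 2 * b + l" using False assms by presburger
  ultimately show ?thesis using S2_eq_0 by simp
qed

theorem corollary3p2:
  shows "(\<forall>n l. l < n \<and> even (n - l) \<longrightarrow>
            real (S2 n l) = 2 / real (n - l)
              * real (((n + l) div 2) choose ((n - l) div 2 + 1))
              * real (((n + l) div 2 - 1) choose ((n - l) div 2 - 1)))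
       \<and> (\<forall>n l. n \<ge> 2 \<longrightarrow>
            (int n - int l) * (int n - int l + 2) * int (S2 n l)
            - (int n + int l) * (int n + int l - 2) * int (S2 (n - 2) l) = 0)"
proof (intro conjI allI impI)
  fix n l :: nat assume "l < n \<and> even (n - l)"
  then have "l < n" "even (n - l)" by blast+
  from \<open>even (n - l)\<close> obtain a where diff: "n - l = 2 * a" by (rule evenE)
  with \<open>l < n\<close> have "1 \<le> a" by simp
  have n: "n = 2 * a + l" "(n + l) div 2 = a + l" "(n - l) div 2 = a"
    using diff \<open>l < n\<close> by auto
  have "real a * real (S2 n l) = real (a + l choose (a + 1)) * real (a + l - 1 choose (a - 1))"
    unfolding n(1) of_nat_mult[symmetric] using S2_closed_form[OF \<open>1 \<le> a\<close>] by (simp only:)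
  with \<open>1 \<le> a\<close> show "real (S2 n l) = 2 / real (n - l)
              * real (((n + l) div 2) choose ((n - l) div 2 + 1))
              * real (((n + l) div 2 - 1) choose ((n - l) div 2 - 1))"
    unfolding n(2,3) diff by (simp add: field_simps)
next
  fix n l :: nat assume "2 \<le> n"
  then show "(int n - int l) * (int n - int l + 2) * int (S2 n l)
            - (int n + int l) * (int n + int l - 2) * int (S2 (n - 2) l) = 0"
    using S2_recurrence by simp
qed

end
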